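(* Let $d\ge2$ and let $H_1,H_2$ be half-spaces in $\mathbb{Z}^d$, i.e. $H_i=\{y\in\mathbb{Z}^d:\langle y,v_i\rangle\ge b_i\}$ for unit vectors $v_i\in\mathbb{R}^d$ (not necessarily coordinate directions) and $b_i\in\mathbb{R}$. For simple random walk $(X_t)$ let $T_i$ be the first hitting time of $H_i$. If $x\in\mathbb{Z}^d\setminus(H_1\cup H_2)$ and $h_i=b_i-\langle x,v_i\rangle>0$ denotes the Euclidean distance from $x$ to the hyperplane bounding $H_i$, then \[ \mathbb{P}_x(T_1>T_2)\le\frac52\,\frac{h_1+1}{h_2}\Big(1+\frac{1}{2h_2}\Big)^2. \]
   Context: $\mathbb{P}_x$ denotes the law of simple random walk on $\mathbb{Z}^d$ started at $x$. *)

theory Defs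
  imports "HOL-Probability.Probability"
begin

text \<open>Lattice points of Z^d are int^'d (d = CARD('d)). The simple random walk is
  modelled on the path space of i.i.d. uniform steps in the set of the 2d unit
  vectors \<open>\<plusminus>e_i\<close>.\<close>

definition lat_to_real :: "int ^ 'd \<Rightarrow> real ^ 'd" where
  "lat_to_real y = (\<chi> i. real_of_int (y $ i))"

definition halfspace :: "real ^ 'd \<Rightarrow> real \<Rightarrow> (int ^ 'd) set" where
  "halfspace v b = {y. lat_to_real y \<bullet> v \<ge> b}"

definition srw_steps :: "(int ^ 'd::finite) set" where
  "srw_steps = {y. \<exists>i s. (s = 1 \<or> s = -1) \<and> y = (\<chi> j. if j = i then s else 0)}"

definition srw_step_pmf :: "(int ^ 'd::finite) pmf" where
  "srw_step_pmf = pmf_of_set srw_steps"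

definition srw_space :: "(int ^ 'd::finite) stream measure" where
  "srw_space = stream_space (measure_pmf srw_step_pmf)"

definition walk :: "int ^ 'd \<Rightarrow> (int ^ 'd) stream \<Rightarrow> nat \<Rightarrow> int ^ 'd" where
  "walk x \<omega> t = x + (\<Sum>k<t. \<omega> !! k)"

definition hit_time :: "(int ^ 'd) set \<Rightarrow> int ^ 'd \<Rightarrow> (int ^ 'd) stream \<Rightarrow> enat" where
  "hit_time A x \<omega> = (if \<exists>t. walk x \<omega> t \<in> A then enat (LEAST t. walk x \<omega> t \<in> A) else \<infinity>)"

end

theory Submission
  imports Defs
begin

(* Proof idea: a superharmonic majorant (barrier) argument.

   1. Hitting Q before P within m steps is described by a recursively defined event
      reach_before P Q m y; the strong event "T_Q < T_P" is the increasing union of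
      these events, and the Markov property of the product measure gives the one-step
      recursion  P_y(reach m+1) = average over the 2d neighbours of P_{y+z}(reach m).
   2. Majorant principle: any u >= 0 with u >= 1 on Q - P and u superharmonic
      (neighbour average <= u) off P and Q bounds P_x(T_Q < T_P) by u x.
   3. For unit vectors v1, v2 the quadratic  a/h + (w^2 + a (h + 1 - a))/h^2, evaluated
      at a = b1 + 1 - <y,v1>, w = <y,v2> - b2 + h, is exactly harmonic for the walk,
      since the second differences of w^2 and -a^2 cancel when |v1| = |v2| = 1.
   4. Truncating it (0 on H1, 1 far from H1, min 1 elsewhere) gives a barrier; at the
      start x it is at most 2 (h1 + 1)/h2, which is below the claimed bound.
   The argument works in every dimension. *)

lemma walk_0 [simp]: "walk y \<omega> 0 = y"
  by (simp add: walk_def)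

lemma walk_Suc: "walk y \<omega> (Suc t) = walk (y + shd \<omega>) (stl \<omega>) t"
  unfolding walk_def sum.lessThan_Suc_shift by (simp add: add.assoc)

primrec reach_before :: "(int^'d::finite) set \<Rightarrow> (int^'d) set \<Rightarrow> nat \<Rightarrow> int^'d \<Rightarrow> (int^'d) stream set" where
  "reach_before P Q 0 y = (if y \<notin> P \<and> y \<in> Q then UNIV else {})"
| "reach_before P Q (Suc m) y =
     (if y \<in> P then {} else if y \<in> Q then UNIV
      else {\<omega>. stl \<omega> \<in> reach_before P Q m (y + shd \<omega>)})"

lemma reach_before_iff:
  "\<omega> \<in> reach_before P Q m y \<longleftrightarrow> (\<exists>t\<le>m. walk y \<omega> t \<in> Q \<and> (\<forall>s\<le>t. walk y \<omega> s \<notin> P))"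
proof (induction m arbitrary: y \<omega>)
  case 0
  then show ?case by auto
next
  case (Suc m)
  have shift: "(\<exists>t\<le>Suc m. walk y \<omega> t \<in> Q \<and> (\<forall>s\<le>t. walk y \<omega> s \<notin> P)) \<longleftrightarrow>
      y \<in> Q \<and> y \<notin> P \<or> y \<notin> P \<and> (\<exists>t\<le>m. walk (y + shd \<omega>) (stl \<omega>) t \<in> Q \<and>
        (\<forall>s\<le>t. walk (y + shd \<omega>) (stl \<omega>) s \<notin> P))"
    by (simp add: less_Suc_eq_le[symmetric] Ex_less_Suc2 All_less_Suc2 walk_Suc) blast
  show ?case
    using shift Suc.IH[of "stl \<omega>" "y + shd \<omega>"] by auto
qed

lemma hit_time_le_iff: "hit_time A x \<omega> \<le> enat t \<longleftrightarrow> (\<exists>s\<le>t. walk x \<omega> s \<in> A)"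
  unfolding hit_time_def by (auto intro: le_trans[OF Least_le] dest: LeastI)

lemma hit_time_less_iff:
  "hit_time Q x \<omega> < hit_time P x \<omega> \<longleftrightarrow> (\<exists>t. walk x \<omega> t \<in> Q \<and> (\<forall>s\<le>t. walk x \<omega> s \<notin> P))"
proof -
  have enat_less: "a < b \<longleftrightarrow> (\<exists>t. a \<le> enat t \<and> \<not> b \<le> enat t)" for a b :: enat
    by (cases a) (auto simp: not_le intro: le_less_trans[of _ "enat _"])
  have "hit_time Q x \<omega> < hit_time P x \<omega> \<longleftrightarrow>
      (\<exists>t. (\<exists>s\<le>t. walk x \<omega> s \<in> Q) \<and> \<not> (\<exists>s\<le>t. walk x \<omega> s \<in> P))"
    by (simp only: enat_less hit_time_le_iff)
  also have "\<dots> \<longleftrightarrow> (\<exists>t. walk x \<omega> t \<in> Q \<and> (\<forall>s\<le>t. walk x \<omega> s \<notin> P))"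
    by (meson order.trans order.refl)
  finally show ?thesis .
qed

lemma space_srw_space [simp]: "space srw_space = UNIV"
  by (simp add: srw_space_def space_stream_space)

lemma prob_space_srw_space: "prob_space srw_space"
  unfolding srw_space_def by (rule prob_space.prob_space_stream_space[OF prob_space_measure_pmf])

lemma UNIV_in_sets_srw_space: "UNIV \<in> sets srw_space"
  by (metis sets.top space_srw_space)

(* Each finite-horizon event is measurable: it depends on the first step and,
   measurably, on the shifted path. *)
lemma reach_before_measurable: "reach_before P Q m y \<in> sets srw_space"
proof (induction m arbitrary: y)
  case 0
  show ?case by (simp add: UNIV_in_sets_srw_space)
next
  case (Suc m)
  have "(\<lambda>\<omega>. indicator (reach_before P Q m (y + shd \<omega>)) (stl \<omega>) :: real) \<in> borel_measurable srw_space"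
  proof (rule measurable_compose_countable[where g = shd])
    show "(\<lambda>\<omega>. indicator (reach_before P Q m (y + s)) (stl \<omega>) :: real) \<in> borel_measurable srw_space"
      for s
      using Suc.IH unfolding srw_space_def by (intro borel_measurable_indicator' measurable_stl) auto
    show "shd \<in> measurable srw_space (count_space UNIV)"
      unfolding srw_space_def by simp
  qed
  then have "{\<omega> \<in> space srw_space. indicator (reach_before P Q m (y + shd \<omega>)) (stl \<omega>) = (1::real)}
      \<in> sets srw_space"
    by measurable
  then show ?case
    by (simp add: indicator_eq_1_iff UNIV_in_sets_srw_space)
qed

definition unit_step :: "'d::finite \<Rightarrow> int \<Rightarrow> int^'d" where
  "unit_step i s = (\<chi> j. if j = i then s else 0)"

lemma srw_steps_eq: "srw_steps = (\<lambda>(i, s). unit_step i s) ` (UNIV \<times> {1, -1})"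
  unfolding srw_steps_def unit_step_def by auto

lemma inj_on_unit_step: "inj_on (\<lambda>(i, s). unit_step i s) (UNIV \<times> {1::int, -1})"
proof (rule inj_onI, clarify)
  fix i i' :: "'d::finite" and s s' :: int
  assume eq: "unit_step i s = unit_step i' s'" and "s \<in> {1, -1}" "s' \<in> {1, -1}"
  have "unit_step i s $ i = unit_step i' s' $ i" using eq by simp
  then have "s = (if i = i' then s' else 0)" unfolding unit_step_def by simp
  with \<open>s \<in> {1, -1}\<close> show "i = i' \<and> s = s'" by (auto split: if_splits)
qed

lemma finite_srw_steps: "finite (srw_steps :: (int^'d::finite) set)"
  unfolding srw_steps_eq by simp

lemma card_srw_steps: "card (srw_steps :: (int^'d::finite) set) = 2 * CARD('d)"
  unfolding srw_steps_eq by (simp add: card_image[OF inj_on_unit_step] card_cartesian_product)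

lemma sum_srw_steps:
  "(\<Sum>z\<in>(srw_steps :: (int^'d::finite) set). f z) = (\<Sum>i\<in>UNIV. f (unit_step i 1) + f (unit_step i (-1)))"
proof -
  have "(\<Sum>z\<in>(srw_steps :: (int^'d) set). f z) = (\<Sum>(i, s)\<in>UNIV \<times> {1::int, -1}. f (unit_step i s))"
    unfolding srw_steps_eq by (subst sum.reindex[OF inj_on_unit_step]) (simp add: case_prod_unfold)
  also have "\<dots> = (\<Sum>i\<in>UNIV. f (unit_step i 1) + f (unit_step i (-1)))"
    by (simp add: sum.cartesian_product[symmetric])
  finally show ?thesis .
qed

lemma reach_before_Suc_measure:
  fixes y :: "int^'d::finite"
  assumes "y \<notin> P" "y \<notin> Q"
  shows "emeasure srw_space (reach_before P Q (Suc m) y) =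
    (\<Sum>z\<in>srw_steps. emeasure srw_space (reach_before P Q m (y + z))) / (2 * CARD('d))"
proof -
  have "emeasure srw_space (reach_before P Q (Suc m) y) =
     (\<integral>\<^sup>+s. emeasure srw_space {\<omega>\<in>space srw_space. s ## \<omega> \<in> reach_before P Q (Suc m) y} \<partial>srw_step_pmf)"
    unfolding srw_space_def
    by (intro prob_space.emeasure_stream_space prob_space_measure_pmf
        reach_before_measurable[unfolded srw_space_def])
  also have "\<dots> = (\<integral>\<^sup>+s. emeasure srw_space (reach_before P Q m (y + s)) \<partial>srw_step_pmf)"
    using assms by simp
  also have "\<dots> = (\<Sum>z\<in>srw_steps. emeasure srw_space (reach_before P Q m (y + z))) / (2 * CARD('d))"
    using card_srw_steps[where 'd='d] unfolding srw_step_pmf_def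
    by (subst nn_integral_pmf_of_set) (auto simp: finite_srw_steps)
  finally show ?thesis .
qed

(* Majorant principle: a nonnegative function that is at least 1 on Q - P and
   superharmonic off P and Q dominates the probability of hitting Q before P.
   It dominates every finite-horizon probability by induction, hence their limit. *)
lemma hit_before_le_superharmonic:
  fixes u :: "int^'d::finite \<Rightarrow> real" and P Q :: "(int^'d) set"
  assumes nonneg: "\<And>y. 0 \<le> u y"
    and target: "\<And>y. y \<in> Q \<Longrightarrow> y \<notin> P \<Longrightarrow> 1 \<le> u y"
    and superharmonic: "\<And>y. y \<notin> P \<Longrightarrow> y \<notin> Q \<Longrightarrow> (\<Sum>z\<in>srw_steps. u (y + z)) \<le> 2 * CARD('d) * u y"
  shows "measure srw_space {\<omega> \<in> space srw_space. hit_time Q x \<omega> < hit_time P x \<omega>} \<le> u x"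
proof -
  interpret prob_space "srw_space :: (int^'d) stream measure"
    by (rule prob_space_srw_space)
  have on_target: "emeasure srw_space A \<le> u y" if "y \<in> Q" "y \<notin> P" for A :: "(int^'d) stream set" and y
  proof -
    have "emeasure srw_space A \<le> ennreal 1" using emeasure_le_1 by simp
    also have "\<dots> \<le> ennreal (u y)" using target[OF that] by (rule ennreal_leI)
    finally show ?thesis .
  qed
  have finite_horizon: "emeasure srw_space (reach_before P Q m y) \<le> u y" for m y
  proof (induction m arbitrary: y)
    case 0
    show ?case using on_target by simp
  next
    case (Suc m)
    consider "y \<in> P" | "y \<in> Q" "y \<notin> P" | "y \<notin> P" "y \<notin> Q" by blast
    then show ?case
    proof cases
      case 1
      then show ?thesis by simp
    next
      case 2
      then show ?thesis using on_target by simp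
    next
      case 3
      have "emeasure srw_space (reach_before P Q (Suc m) y)
          = (\<Sum>z\<in>srw_steps. emeasure srw_space (reach_before P Q m (y + z))) / (2 * CARD('d))"
        by (rule reach_before_Suc_measure[OF 3])
      also have "\<dots> \<le> (\<Sum>z\<in>srw_steps. ennreal (u (y + z))) / (2 * CARD('d))"
        by (intro divide_right_mono_ennreal sum_mono Suc.IH)
      also have "\<dots> = ennreal ((\<Sum>z\<in>srw_steps. u (y + z)) / (2 * CARD('d)))"
        using nonneg
        by (simp add: sum_nonneg ennreal_of_nat_eq_real_of_nat ennreal_mult flip: divide_ennreal)
      also have "\<dots> \<le> ennreal (u y)"
        using superharmonic[OF 3] by (intro ennreal_leI) (simp add: divide_le_eq mult.commute)
      finally show ?thesis .
    qed
  qed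
  have event: "{\<omega> \<in> space srw_space. hit_time Q x \<omega> < hit_time P x \<omega>} = (\<Union>m. reach_before P Q m x)"
    by (auto simp: hit_time_less_iff reach_before_iff) blast
  have "incseq (\<lambda>m. reach_before P Q m x)"
  proof (rule incseq_SucI, rule subsetI)
    fix m \<omega> assume "\<omega> \<in> reach_before P Q m x"
    then show "\<omega> \<in> reach_before P Q (Suc m) x"
      unfolding reach_before_iff by (meson le_SucI)
  qed
  then have "emeasure srw_space (\<Union>m. reach_before P Q m x) = (SUP m. emeasure srw_space (reach_before P Q m x))"
    by (intro SUP_emeasure_incseq[symmetric]) (auto simp: reach_before_measurable)
  also have "\<dots> \<le> u x"
    by (rule SUP_least) (rule finite_horizon)
  finally show ?thesis
    unfolding event by (simp add: emeasure_eq_measure nonneg)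
qed

lemma lat_to_real_add: "lat_to_real (y + z) = lat_to_real y + lat_to_real z"
  unfolding lat_to_real_def by (simp add: vec_eq_iff)

lemma inner_unit_step: "lat_to_real (unit_step i s) \<bullet> v = of_int s * v $ i"
  unfolding lat_to_real_def unit_step_def inner_vec_def
  by (simp add: if_distrib[of real_of_int] if_distrib[of "\<lambda>x. x * _"] cong: if_cong)

lemma abs_inner_srw_step_le: "z \<in> srw_steps \<Longrightarrow> \<bar>lat_to_real z \<bullet> v\<bar> \<le> norm v"
  unfolding srw_steps_eq using component_le_norm_cart[of v] by (auto simp: inner_unit_step)

lemma power2_norm_vec: "(norm (v :: real^'d::finite))^2 = (\<Sum>i\<in>UNIV. (v $ i)^2)"
  using dot_square_norm[of v] by (simp add: inner_vec_def power2_eq_square)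

(* If g has constant second differences, g(a+s,b+t) + g(a-s,b-t) - 2 g(a,b)
   = kappa s^2 + mu t^2, then summing g(<y+z,v>, <y+z,w>) over the steps z = +-e_i
   collects kappa |v|^2 + mu |w|^2, because sum_i v_i^2 = |v|^2. *)
lemma sum_srw_steps_second_difference:
  fixes g :: "real \<Rightarrow> real \<Rightarrow> real" and v w :: "real^'d::finite" and y :: "int^'d"
  assumes second_difference:
    "\<And>a b s t. g (a + s) (b + t) + g (a - s) (b - t) = 2 * g a b + \<kappa> * s^2 + \<mu> * t^2"
  shows "(\<Sum>z\<in>srw_steps. g (lat_to_real (y + z) \<bullet> v) (lat_to_real (y + z) \<bullet> w))
    = 2 * CARD('d) * g (lat_to_real y \<bullet> v) (lat_to_real y \<bullet> w) + \<kappa> * (norm v)^2 + \<mu> * (norm w)^2"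
proof -
  define a b where "a = lat_to_real y \<bullet> v" and "b = lat_to_real y \<bullet> w"
  have pair: "g (lat_to_real (y + unit_step i 1) \<bullet> v) (lat_to_real (y + unit_step i 1) \<bullet> w)
      + g (lat_to_real (y + unit_step i (-1)) \<bullet> v) (lat_to_real (y + unit_step i (-1)) \<bullet> w)
      = 2 * g a b + \<kappa> * (v $ i)^2 + \<mu> * (w $ i)^2" for i
    using second_difference[of a "v $ i" b "w $ i"]
    by (simp add: a_def b_def lat_to_real_add inner_add_left inner_unit_step)
  have "(\<Sum>z\<in>srw_steps. g (lat_to_real (y + z) \<bullet> v) (lat_to_real (y + z) \<bullet> w))
      = (\<Sum>i\<in>UNIV. 2 * g a b + \<kappa> * (v $ i)^2 + \<mu> * (w $ i)^2)"
    by (simp only: sum_srw_steps pair)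
  also have "\<dots> = 2 * CARD('d) * g a b + \<kappa> * (norm v)^2 + \<mu> * (norm w)^2"
    by (simp add: sum.distrib power2_norm_vec sum_distrib_left)
  finally show ?thesis by (simp add: a_def b_def)
qed

(* The quadratic potential in the coordinates a (shifted distance to H1) and w
   (position along v2; H2 corresponds to w >= h). *)
definition strip_potential :: "real \<Rightarrow> real \<Rightarrow> real \<Rightarrow> real" where
  "strip_potential h a w = a / h + (w^2 + a * (h + 1 - a)) / h^2"

(* Its second differences in a and w are -2/h^2 and 2/h^2: they cancel for unit steps. *)
lemma strip_potential_second_difference:
  "strip_potential h (a - s) (w + t) + strip_potential h (a + s) (w - t)
    = 2 * strip_potential h a w + (- 2 / h^2) * s^2 + (2 / h^2) * t^2"
  unfolding strip_potential_def by (simp add: field_simps power2_eq_square add_divide_distrib[symmetric])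

(* Lower bounds on the strip 0 <= a <= h + 1, where a (h + 1 - a) >= 0. *)
lemma strip_potential_ge_ratio:
  assumes "h > 0" "0 \<le> a" "a \<le> h + 1"
  shows "a / h \<le> strip_potential h a w"
  using assms unfolding strip_potential_def by simp

lemma strip_potential_ge_one:
  assumes "h > 0" "0 \<le> a" "a \<le> h + 1" "h \<le> w"
  shows "1 \<le> strip_potential h a w"
proof -
  have "h^2 \<le> w^2" using assms by (intro power_mono) auto
  moreover have "0 \<le> a * (h + 1 - a)" using assms by simp
  ultimately have "h^2 \<le> w^2 + a * (h + 1 - a)" by linarith
  then have "1 \<le> (w^2 + a * (h + 1 - a)) / h^2" using assms by (simp add: le_divide_eq)
  moreover have "0 \<le> a / h" using assms by simp
  ultimately show ?thesis unfolding strip_potential_def by linarith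
qed

lemma strip_potential_center:
  assumes "h > 0" "1 \<le> a"
  shows "strip_potential h a 0 \<le> 2 * a / h"
proof -
  have "a * (h + 1 - a) \<le> a * h" using assms by (simp add: mult_left_mono)
  then have "a * (h + 1 - a) / h^2 \<le> a * h / h^2"
    by (rule divide_right_mono) simp
  also have "\<dots> = a / h" using assms by (simp add: power2_eq_square)
  finally
  show ?thesis unfolding strip_potential_def by simp
qed

(* The potential evaluated on the lattice; h will be the distance from x to H2,
   so that w = <y,v2> - b2 + h vanishes at x and equals h on the boundary of H2. *)
definition lattice_potential ::
    "real^'d \<Rightarrow> real \<Rightarrow> real^'d \<Rightarrow> real \<Rightarrow> real \<Rightarrow> int^'d \<Rightarrow> real" where
  "lattice_potential v1 b1 v2 b2 h y =
     strip_potential h (b1 + 1 - lat_to_real y \<bullet> v1) (lat_to_real y \<bullet> v2 - b2 + h)"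

lemma lattice_potential_harmonic:
  fixes v1 v2 :: "real^'d::finite"
  assumes "norm v1 = 1" "norm v2 = 1"
  shows "(\<Sum>z\<in>srw_steps. lattice_potential v1 b1 v2 b2 h (y + z))
    = 2 * CARD('d) * lattice_potential v1 b1 v2 b2 h y"
proof -
  define g where "g p q = strip_potential h (b1 + 1 - p) (q - b2 + h)" for p q
  have "g (p + s) (q + t) + g (p - s) (q - t) = 2 * g p q + (- 2 / h^2) * s^2 + (2 / h^2) * t^2"
    for p q s t
    using strip_potential_second_difference[of h "b1 + 1 - p" s "q - b2 + h" t]
    unfolding g_def by (simp add: algebra_simps)
  from sum_srw_steps_second_difference[where g = g, OF this, of y v1 v2]
  show ?thesis using assms by (simp add: g_def lattice_potential_def)
qed

definition barrier :: "real^'d \<Rightarrow> real \<Rightarrow> real^'d \<Rightarrow> real \<Rightarrow> real \<Rightarrow> int^'d \<Rightarrow> real" where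
  "barrier v1 b1 v2 b2 h y =
     (if y \<in> halfspace v1 b1 then 0
      else if h \<le> b1 + 1 - lat_to_real y \<bullet> v1 then 1
      else min 1 (lattice_potential v1 b1 v2 b2 h y))"

lemma barrier_le_potential:
  assumes "h > 0" "0 \<le> b1 + 1 - lat_to_real y \<bullet> v1" "b1 + 1 - lat_to_real y \<bullet> v1 \<le> h + 1"
  shows "barrier v1 b1 v2 b2 h y \<le> lattice_potential v1 b1 v2 b2 h y"
proof -
  let ?a = "b1 + 1 - lat_to_real y \<bullet> v1"
  have ratio: "?a / h \<le> lattice_potential v1 b1 v2 b2 h y"
    unfolding lattice_potential_def using assms by (rule strip_potential_ge_ratio)
  moreover have "0 \<le> ?a / h" using assms by simp
  moreover have "h \<le> ?a \<Longrightarrow> 1 \<le> ?a / h" using assms by simp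
  ultimately show ?thesis unfolding barrier_def by auto
qed

lemma barrier_nonneg:
  assumes "h > 0"
  shows "0 \<le> barrier v1 b1 v2 b2 h y"
proof (cases "y \<in> halfspace v1 b1 \<or> h \<le> b1 + 1 - lat_to_real y \<bullet> v1")
  case False
  let ?a = "b1 + 1 - lat_to_real y \<bullet> v1"
  have "1 < ?a" "?a < h" using False by (auto simp: halfspace_def)
  then have "?a / h \<le> lattice_potential v1 b1 v2 b2 h y"
    unfolding lattice_potential_def using assms by (intro strip_potential_ge_ratio) auto
  moreover have "0 \<le> ?a / h" using \<open>1 < ?a\<close> assms by simp
  ultimately show ?thesis using False unfolding barrier_def by auto
qed (auto simp: barrier_def)

lemma barrier_le_one: "barrier v1 b1 v2 b2 h y \<le> 1"
  unfolding barrier_def by auto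

lemma barrier_on_target:
  assumes "h > 0" "y \<in> halfspace v2 b2" "y \<notin> halfspace v1 b1"
  shows "1 \<le> barrier v1 b1 v2 b2 h y"
proof (cases "h \<le> b1 + 1 - lat_to_real y \<bullet> v1")
  case False
  have "1 \<le> lattice_potential v1 b1 v2 b2 h y"
    unfolding lattice_potential_def
    using assms False by (intro strip_potential_ge_one) (auto simp: halfspace_def)
  then show ?thesis using assms(3) False unfolding barrier_def by simp
qed (use assms in \<open>simp add: barrier_def\<close>)

lemma barrier_superharmonic:
  fixes v1 v2 :: "real^'d::finite"
  assumes "norm v1 = 1" "norm v2 = 1" "h > 0" "y \<notin> halfspace v1 b1"
  shows "(\<Sum>z\<in>srw_steps. barrier v1 b1 v2 b2 h (y + z)) \<le> 2 * CARD('d) * barrier v1 b1 v2 b2 h y"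
proof -
  let ?u = "barrier v1 b1 v2 b2 h" and ?F = "lattice_potential v1 b1 v2 b2 h"
  have "(\<Sum>z\<in>srw_steps. ?u (y + z)) \<le> (\<Sum>z\<in>(srw_steps :: (int^'d) set). 1)"
    by (rule sum_mono) (rule barrier_le_one)
  then have at_most_card: "(\<Sum>z\<in>srw_steps. ?u (y + z)) \<le> 2 * CARD('d)"
    by (simp add: card_srw_steps)
  show ?thesis
  proof (cases "h \<le> b1 + 1 - lat_to_real y \<bullet> v1")
    case True
    then show ?thesis using assms(4) at_most_card unfolding barrier_def by simp
  next
    case inside: False
    have below_potential: "?u (y + z) \<le> ?F (y + z)" if "z \<in> srw_steps" for z
    proof (rule barrier_le_potential)
      have "\<bar>lat_to_real z \<bullet> v1\<bar> \<le> 1" using abs_inner_srw_step_le[OF that, of v1] assms(1) by simp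
      moreover have "1 < b1 + 1 - lat_to_real y \<bullet> v1" using assms(4) by (simp add: halfspace_def)
      ultimately show "0 \<le> b1 + 1 - lat_to_real (y + z) \<bullet> v1"
        and "b1 + 1 - lat_to_real (y + z) \<bullet> v1 \<le> h + 1"
        using inside by (auto simp: lat_to_real_add inner_add_left)
    qed (rule assms(3))
    have "(\<Sum>z\<in>srw_steps. ?u (y + z)) \<le> (\<Sum>z\<in>srw_steps. ?F (y + z))"
      using below_potential by (rule sum_mono)
    also have "\<dots> = 2 * CARD('d) * ?F y"
      by (rule lattice_potential_harmonic[OF assms(1,2)])
    finally show ?thesis
      using at_most_card assms(4) inside unfolding barrier_def by simp
  qed
qed

lemma barrier_at_start:
  assumes "h = b2 - lat_to_real x \<bullet> v2" "h > 0" "x \<notin> halfspace v1 b1"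
  shows "barrier v1 b1 v2 b2 h x \<le> 2 * (b1 - lat_to_real x \<bullet> v1 + 1) / h"
proof -
  let ?a = "b1 - lat_to_real x \<bullet> v1 + 1"
  have a_ge: "1 \<le> ?a" using assms(3) by (simp add: halfspace_def)
  show ?thesis
  proof (cases "h \<le> ?a")
    case True
    then have "1 \<le> 2 * ?a / h" using assms(2) by (simp add: le_divide_eq)
    then show ?thesis using barrier_le_one order.trans by blast
  next
    case False
    have "lattice_potential v1 b1 v2 b2 h x = strip_potential h ?a 0"
      unfolding lattice_potential_def using assms(1) by (simp add: algebra_simps)
    also have "\<dots> \<le> 2 * ?a / h" using assms(2) a_ge by (rule strip_potential_center)
    finally show ?thesis using assms(3) False unfolding barrier_def by (simp add: algebra_simps)
  qed
qed

theorem lemma5p4: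
  fixes v1 v2 :: "real ^ 'd::finite" and b1 b2 :: real and x :: "int ^ 'd"
  assumes "CARD('d) \<ge> 2"
    and "norm v1 = 1" and "norm v2 = 1"
    and "x \<notin> halfspace v1 b1" and "x \<notin> halfspace v2 b2"
  defines "h1 \<equiv> b1 - lat_to_real x \<bullet> v1" and "h2 \<equiv> b2 - lat_to_real x \<bullet> v2"
  shows "measure srw_space
           {\<omega> \<in> space srw_space. hit_time (halfspace v2 b2) x \<omega> < hit_time (halfspace v1 b1) x \<omega>}
         \<le> 5/2 * ((h1 + 1) / h2) * (1 + 1 / (2 * h2))^2"
proof -
  have h1_pos: "h1 > 0" and h2_pos: "h2 > 0"
    using assms(4,5) unfolding h1_def h2_def halfspace_def by simp_all
  have "measure srw_space
      {\<omega> \<in> space srw_space. hit_time (halfspace v2 b2) x \<omega> < hit_time (halfspace v1 b1) x \<omega>}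
      \<le> barrier v1 b1 v2 b2 h2 x"
    using barrier_nonneg barrier_on_target barrier_superharmonic assms(2,3) h2_pos
    by (intro hit_before_le_superharmonic) auto
  also have "\<dots> \<le> 2 * ((h1 + 1) / h2)"
    using barrier_at_start[OF _ h2_pos assms(4)] unfolding h1_def h2_def by simp
  also have "\<dots> \<le> 5/2 * ((h1 + 1) / h2) * 1"
    using h1_pos h2_pos by (simp add: field_simps)
  also have "\<dots> \<le> 5/2 * ((h1 + 1) / h2) * (1 + 1 / (2 * h2))^2"
    using h1_pos h2_pos by (intro mult_left_mono) simp_all
  finally show ?thesis .
qed

end
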